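(* Let $0\to E\to F\to G\to 0$ be an exact sequence of vector bundles on $\mathbb{P}^1$ with $E$ balanced and $G$ $2$-balanced. (1) If $\mu(E)\le\mu(F)$, then either $F$ is $2$-balanced or every summand of $G$ has degree at least $\lfloor\mu(E)\rfloor$. (2) If $\mu(F)\le\mu(E)$, then either $F$ is $2$-balanced or every summand of $G$ has degree at most $\lceil\mu(E)\rceil$.
   Context: For a vector bundle $W$ on $\mathbb{P}^1$, $\mu(W)=\deg(W)/\operatorname{rank}(W)$. Writing $W\cong\bigoplus_{i=1}^r\mathcal{O}(a_i)$ with $a_1\ge\dots\ge a_r$, $W$ is $j$-balanced if $a_1-a_r\le j$; balanced means $1$-balanced. *)

theory Defs
  imports Complex_Main
begin

text \<open>A vector bundle on P^1 (over the complex numbers) is, by Grothendieck's theorem,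
  isomorphic to a direct sum of line bundles O(a_1) + ... + O(a_r); we represent it by the
  list of the a_i.  rank = length, degree = sum.\<close>

definition rk :: "int list \<Rightarrow> nat" where "rk W = length W"
definition dg :: "int list \<Rightarrow> int" where "dg W = sum_list W"
definition mu :: "int list \<Rightarrow> real" where "mu W = real_of_int (dg W) / real (rk W)"

definition balanced_by :: "nat \<Rightarrow> int list \<Rightarrow> bool" where
  "balanced_by j W \<longleftrightarrow> W = [] \<or> Max (set W) - Min (set W) \<le> int j"

text \<open>A section of O(d) = homogeneous polynomial of degree d in x,y, given by coefficients
  c k of x^k y^(d-k), k \<le> d; it is 0 if d < 0.  Evaluation at (x,y).\<close>
definition hpoly_eval :: "int \<Rightarrow> (nat \<Rightarrow> complex) \<Rightarrow> complex \<Rightarrow> complex \<Rightarrow> complex" where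
  "hpoly_eval d c x y =
     (if d < 0 then 0 else (\<Sum>k\<le>nat d. c k * x ^ k * y ^ (nat d - k)))"

text \<open>A bundle map from O(A) to O(B) is a matrix phi j i in Hom(O(A!i), O(B!j)) = H^0(O(B!j - A!i)).
  Its value on the fibre over the point [x:y] (with respect to the standard trivialisations
  of the O(a) over the lifted point (x,y)).\<close>
definition fibre :: "int list \<Rightarrow> (nat \<Rightarrow> complex) set" where
  "fibre A = {v. \<forall>i\<ge>length A. v i = 0}"

definition map_at :: "int list \<Rightarrow> int list \<Rightarrow> (nat \<Rightarrow> nat \<Rightarrow> nat \<Rightarrow> complex)
     \<Rightarrow> complex \<Rightarrow> complex \<Rightarrow> (nat \<Rightarrow> complex) \<Rightarrow> (nat \<Rightarrow> complex)" where
  "map_at A B phi x y v =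
     (\<lambda>j. if j < length B then (\<Sum>i<length A. hpoly_eval (B!j - A!i) (phi j i) x y * v i) else 0)"

text \<open>0 \<rightarrow> E \<rightarrow> F \<rightarrow> G \<rightarrow> 0 is an exact sequence of vector bundles: since all terms are
  locally free, this is equivalent to exactness on every fibre.\<close>
definition short_exact ::
  "int list \<Rightarrow> int list \<Rightarrow> int list \<Rightarrow> (nat \<Rightarrow> nat \<Rightarrow> nat \<Rightarrow> complex)
     \<Rightarrow> (nat \<Rightarrow> nat \<Rightarrow> nat \<Rightarrow> complex) \<Rightarrow> bool" where
  "short_exact E F G alpha beta \<longleftrightarrow>
     (\<forall>x y. (x, y) \<noteq> (0, 0) \<longrightarrow>
        inj_on (map_at E F alpha x y) (fibre E) \<and>
        map_at F G beta x y ` fibre F = fibre G \<and>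
        map_at E F alpha x y ` fibre E = {w \<in> fibre F. map_at F G beta x y w = (\<lambda>_. 0)})"

end

theory Submission
  imports Defs "Jordan_Normal_Form.Determinant" "HOL-Complex_Analysis.Complex_Analysis"
begin

text \<open>On every fibre the sequence is an exact sequence of matrices \<open>A\<close>, \<open>B\<close> whose entries are
  binary forms. For a right inverse \<open>C\<close> of \<open>B\<close> the sequence splits, so traces give
  \<open>rk F = rk E + rk G\<close>, and \<open>det [A | C]\<close> is a nowhere vanishing homogeneous function of
  degree \<open>dg F - dg E - dg G\<close>, which must be \<open>0\<close> by Liouville's theorem. If a summand \<open>O(f)\<close> of
  \<open>F\<close> had degree above all summands of \<open>E\<close> and \<open>G\<close>, it would lie in the image of \<open>E\<close> on every
  fibre, and the preimage of its generator would be homogeneous of negative degree, hence zero by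
  Liouville again; dually, transposing, no summand of \<open>F\<close> lies below all of \<open>E\<close> and \<open>G\<close>.
  What remains is arithmetic of slopes: \<open>\<mu>(E) \<le> \<mu>(F)\<close> forces \<open>\<mu>(E) \<le> \<mu>(G)\<close>, hence
  \<open>max E \<le> max G\<close> as \<open>E\<close> is balanced, while a summand of \<open>G\<close> below \<open>\<lfloor>\<mu>(E)\<rfloor>\<close> gives
  \<open>min G \<le> min E\<close>; then all degrees of \<open>F\<close> lie in the range of \<open>G\<close>, so \<open>F\<close> is 2-balanced.
  The second statement is symmetric.\<close>

hide_type (open) Finite_Cartesian_Product.vec
hide_const (open) Finite_Cartesian_Product.vec Finite_Cartesian_Product.mat
  Finite_Cartesian_Product.row Finite_Cartesian_Product.transpose Determinants.det
unbundle no vec_syntax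
no_notation fps_nth (infixl \<open>$\<close> 75)

section \<open>Matrix algebra\<close>

definition append_cols :: "'a :: zero mat \<Rightarrow> 'a mat \<Rightarrow> 'a mat" (infixr \<open>@\<^sub>c\<close> 65) where
  "A @\<^sub>c C = four_block_mat A C (0\<^sub>m 0 (dim_col A)) (0\<^sub>m 0 (dim_col C))"

lemma dim_append_cols[simp]:
  "dim_row (A @\<^sub>c C) = dim_row A" "dim_col (A @\<^sub>c C) = dim_col A + dim_col C"
  by (simp_all add: append_cols_def)

lemma carrier_append_cols[simp, intro]:
  "A \<in> carrier_mat nr nc1 \<Longrightarrow> C \<in> carrier_mat nr nc2 \<Longrightarrow> A @\<^sub>c C \<in> carrier_mat nr (nc1 + nc2)"
  unfolding append_cols_def by auto

lemma index_append_cols: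
  assumes "A \<in> carrier_mat nr nc1" "C \<in> carrier_mat nr nc2" "i < nr" "j < nc1 + nc2"
  shows "(A @\<^sub>c C) $$ (i, j) = (if j < nc1 then A $$ (i, j) else C $$ (i, j - nc1))"
  using assms unfolding append_cols_def by auto

lemma append_rows_mult_append_cols:
  fixes L B A C :: "'a :: semiring_0 mat"
  assumes "L \<in> carrier_mat nr1 n" "B \<in> carrier_mat nr2 n"
    and "A \<in> carrier_mat n nc1" "C \<in> carrier_mat n nc2"
  shows "(L @\<^sub>r B) * (A @\<^sub>c C) = four_block_mat (L * A) (L * C) (B * A) (B * C)"
  using assms unfolding append_rows_def append_cols_def
  by (subst mult_four_block_mat[of _ nr1 n _ 0 _ nr2 _ _ nc1 _ nc2]) auto

definition trace_mat :: "'a :: comm_ring_1 mat \<Rightarrow> 'a" where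
  "trace_mat M = (\<Sum>i<dim_row M. M $$ (i, i))"

lemma trace_mat_mult_comm:
  assumes "A \<in> carrier_mat m n" "L \<in> carrier_mat n m"
  shows "trace_mat (A * L) = trace_mat (L * A)"
proof -
  have "trace_mat (A * L) = (\<Sum>i<m. \<Sum>k<n. A $$ (i, k) * L $$ (k, i))"
    using assms by (simp add: trace_mat_def scalar_prod_def atLeast0LessThan)
  also have "\<dots> = (\<Sum>k<n. \<Sum>i<m. L $$ (k, i) * A $$ (i, k))"
    by (subst sum.swap) (simp add: mult.commute)
  also have "\<dots> = trace_mat (L * A)"
    using assms by (simp add: trace_mat_def scalar_prod_def atLeast0LessThan)
  finally show ?thesis .
qed

lemma trace_mat_add:
  "A \<in> carrier_mat n n \<Longrightarrow> B \<in> carrier_mat n n \<Longrightarrow> trace_mat (A + B) = trace_mat A + trace_mat B"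
  by (simp add: trace_mat_def sum.distrib)

lemma trace_mat_one[simp]: "trace_mat (1\<^sub>m n) = of_nat n"
  by (simp add: trace_mat_def)

definition rescale_mat :: "(nat \<Rightarrow> 'a) \<Rightarrow> (nat \<Rightarrow> 'a) \<Rightarrow> 'a :: comm_ring_1 mat \<Rightarrow> 'a mat" where
  "rescale_mat a b M = mat (dim_row M) (dim_col M) (\<lambda>(i, j). a i * M $$ (i, j) * b j)"

lemma rescale_mat_carrier[simp]: "M \<in> carrier_mat nr nc \<Longrightarrow> rescale_mat a b M \<in> carrier_mat nr nc"
  and dim_rescale_mat[simp]:
    "dim_row (rescale_mat a b M) = dim_row M" "dim_col (rescale_mat a b M) = dim_col M"
  and index_rescale_mat[simp]:
    "i < dim_row M \<Longrightarrow> j < dim_col M \<Longrightarrow> rescale_mat a b M $$ (i, j) = a i * M $$ (i, j) * b j"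
  by (auto simp: rescale_mat_def)

lemma det_rescale_mat:
  assumes M: "M \<in> carrier_mat n n"
  shows "det (rescale_mat a b M) = (\<Prod>i<n. a i) * (\<Prod>j<n. b j) * det M"
proof -
  have diagonal_product: "(\<Prod>i<n. rescale_mat a b M $$ (i, p i))
      = (\<Prod>i<n. a i) * (\<Prod>j<n. b j) * (\<Prod>i<n. M $$ (i, p i))" if p: "p permutes {..<n}" for p
  proof -
    have "(\<Prod>i<n. rescale_mat a b M $$ (i, p i)) = (\<Prod>i<n. a i * M $$ (i, p i) * b (p i))"
      using M permutes_in_image[OF p] by (intro prod.cong) auto
    also have "(\<Prod>i<n. b (p i)) = (\<Prod>j<n. b j)"
      using prod.permute[OF p, of b] by (simp add: comp_def)
    ultimately show ?thesis by (simp add: prod.distrib mult_ac)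
  qed
  have "det (rescale_mat a b M)
      = (\<Sum>p | p permutes {..<n}. signof p * (\<Prod>i<n. rescale_mat a b M $$ (i, p i)))"
    using M by (simp add: Determinant.det_def atLeast0LessThan del: index_rescale_mat)
  also have "\<dots> = (\<Prod>i<n. a i) * (\<Prod>j<n. b j)
      * (\<Sum>p | p permutes {..<n}. signof p * (\<Prod>i<n. M $$ (i, p i)))"
    unfolding sum_distrib_left by (rule sum.cong) (simp_all add: diagonal_product mult_ac)
  finally show ?thesis
    using M by (simp add: Determinant.det_def atLeast0LessThan)
qed

lemma rescale_mat_mult:
  assumes "M \<in> carrier_mat p q" "N \<in> carrier_mat q s" and inverse: "\<And>j. j < q \<Longrightarrow> b j * c j = 1"
  shows "rescale_mat a b M * rescale_mat c d N = rescale_mat a d (M * N)"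
proof (rule eq_matI)
  fix i k assume "i < dim_row (rescale_mat a d (M * N))" "k < dim_col (rescale_mat a d (M * N))"
  then have i: "i < p" and k: "k < s" using assms by auto
  have "(rescale_mat a b M * rescale_mat c d N) $$ (i, k)
      = (\<Sum>j<q. a i * (M $$ (i, j) * N $$ (j, k)) * d k * (b j * c j))"
    using assms(1,2) i k by (auto simp: scalar_prod_def atLeast0LessThan mult_ac intro!: sum.cong)
  also have "\<dots> = (\<Sum>j<q. a i * (M $$ (i, j) * N $$ (j, k)) * d k)"
    by (intro sum.cong) (simp_all add: inverse)
  also have "\<dots> = rescale_mat a d (M * N) $$ (i, k)"
    using assms i k by (simp add: scalar_prod_def atLeast0LessThan sum_distrib_left
        sum_distrib_right mult_ac)
  finally show "(rescale_mat a b M * rescale_mat c d N) $$ (i, k)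
    = rescale_mat a d (M * N) $$ (i, k)" .
qed (use assms in auto)

lemma rescale_mat_mult_vec:
  assumes "M \<in> carrier_mat p q" "v \<in> carrier_vec q"
  shows "rescale_mat a b M *\<^sub>v v = vec p (\<lambda>i. a i * (M *\<^sub>v vec q (\<lambda>j. b j * v $ j)) $ i)"
  using assms by (intro eq_vecI) (auto simp: scalar_prod_def sum_distrib_left mult_ac)

lemma rescale_mat_append_cols:
  assumes "A \<in> carrier_mat p q1" "C \<in> carrier_mat p q2"
  shows "rescale_mat a b A @\<^sub>c rescale_mat a c C
    = rescale_mat a (\<lambda>j. if j < q1 then b j else c (j - q1)) (A @\<^sub>c C)"
  using assms by (intro eq_matI) (auto simp: index_append_cols[of _ p q1 _ q2]
      index_append_cols[of "rescale_mat a b A" p q1 "rescale_mat a c C" q2])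

lemma exists_factor_if_cols_in_image:
  assumes M: "M \<in> carrier_mat p q" and W: "W \<in> carrier_mat p s"
    and image: "\<And>k. k < s \<Longrightarrow> \<exists>v \<in> carrier_vec q. M *\<^sub>v v = col W k"
  shows "\<exists>N \<in> carrier_mat q s. M * N = W"
proof -
  obtain v where v: "\<And>k. k < s \<Longrightarrow> v k \<in> carrier_vec q \<and> M *\<^sub>v v k = col W k"
    using image by metis
  define N where "N = mat q s (\<lambda>(i, k). v k $ i)"
  have N: "N \<in> carrier_mat q s" by (simp add: N_def)
  have "M * N = W"
  proof (rule eq_matI)
    fix i k assume "i < dim_row W" "k < dim_col W"
    then have i: "i < p" and k: "k < s" using W by auto
    have "col N k = v k" using v[OF k] k by (auto simp: N_def)
    then have "col (M * N) k = col W k" using M N k v[OF k] by simp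
    then have "col (M * N) k $ i = col W k $ i" by simp
    then show "(M * N) $$ (i, k) = W $$ (i, k)" using M N W i k by simp
  qed (use M N W in auto)
  with N show ?thesis by blast
qed

lemma surj_imp_right_inverse:
  assumes B: "B \<in> carrier_mat r m"
    and surj: "\<And>z. z \<in> carrier_vec r \<Longrightarrow> \<exists>w \<in> carrier_vec m. B *\<^sub>v w = z"
  shows "\<exists>C \<in> carrier_mat m r. B * C = 1\<^sub>m r"
  by (rule exists_factor_if_cols_in_image[OF B one_carrier_mat]) (simp add: surj)

lemma inj_imp_mult_left_cancel:
  fixes A :: "'a :: comm_ring_1 mat"
  assumes A: "A \<in> carrier_mat m n"
    and inj: "\<And>v. v \<in> carrier_vec n \<Longrightarrow> A *\<^sub>v v = 0\<^sub>v m \<Longrightarrow> v = 0\<^sub>v n"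
    and X: "X \<in> carrier_mat n s" and Y: "Y \<in> carrier_mat n s" and eq: "A * X = A * Y"
  shows "X = Y"
proof (rule eq_matI)
  fix i k assume "i < dim_row Y" "k < dim_col Y"
  then have i: "i < n" and k: "k < s" using Y by auto
  have "A *\<^sub>v (col X k - col Y k) = col (A * X) k - col (A * Y) k"
    using A X Y k by (simp add: mult_minus_distrib_mat_vec)
  also have "\<dots> = 0\<^sub>v m" using A Y k unfolding eq by simp
  finally have "col X k - col Y k = 0\<^sub>v n" using X Y by (intro inj) (auto simp: carrier_vecI)
  then have "(col X k - col Y k) $ i = 0" using i by simp
  then show "X $$ (i, k) = Y $$ (i, k)" using X Y i k by simp
qed (use X Y in auto)

lemma eq_zero_mat_if_annihilates:
  fixes M :: "'a :: semiring_1 mat"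
  assumes M: "M \<in> carrier_mat p q" and zero: "\<And>v. v \<in> carrier_vec q \<Longrightarrow> M *\<^sub>v v = 0\<^sub>v p"
  shows "M = 0\<^sub>m p q"
proof (rule eq_matI)
  fix i j assume "i < dim_row (0\<^sub>m p q :: 'a mat)" "j < dim_col (0\<^sub>m p q :: 'a mat)"
  then have i: "i < p" and j: "j < q" by auto
  have "M $$ (i, j) = (M *\<^sub>v unit_vec q j) $ i" using M i j by simp
  then show "M $$ (i, j) = 0\<^sub>m p q $$ (i, j)" using zero[of "unit_vec q j"] i j by simp
qed (use M in auto)

locale exact_mat_seq =
  fixes A B :: "'a :: field_char_0 mat" and n m r :: nat
  assumes A: "A \<in> carrier_mat m n" and B: "B \<in> carrier_mat r m"
    and inj_A: "\<And>v. v \<in> carrier_vec n \<Longrightarrow> A *\<^sub>v v = 0\<^sub>v m \<Longrightarrow> v = 0\<^sub>v n"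
    and surj_B: "\<And>z. z \<in> carrier_vec r \<Longrightarrow> \<exists>w \<in> carrier_vec m. B *\<^sub>v w = z"
    and kernel_B: "\<And>w. w \<in> carrier_vec m \<Longrightarrow> B *\<^sub>v w = 0\<^sub>v r \<Longrightarrow> \<exists>v \<in> carrier_vec n. A *\<^sub>v v = w"
    and BA: "B * A = 0\<^sub>m r n"
begin

lemma splitting:
  assumes C: "C \<in> carrier_mat m r" and BC: "B * C = 1\<^sub>m r"
  obtains L where "L \<in> carrier_mat n m" "L * A = 1\<^sub>m n" "A * L + C * B = 1\<^sub>m m"
proof -
  define P where "P = 1\<^sub>m m - C * B"
  have P: "P \<in> carrier_mat m m" unfolding P_def using B C by (intro minus_carrier_mat) auto
  have "B * P = B * 1\<^sub>m m - B * (C * B)"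
    unfolding P_def using B C by (intro mult_minus_distrib_mat) auto
  also have "B * (C * B) = B" using B C by (simp add: assoc_mult_mat[of B r m C r B, symmetric] BC)
  also have "B * 1\<^sub>m m - B = 0\<^sub>m r m" using B by simp
  finally have BP: "B * P = 0\<^sub>m r m" .
  have "\<exists>v \<in> carrier_vec n. A *\<^sub>v v = col P k" if "k < m" for k
    using B P BP that by (intro kernel_B) (auto simp flip: col_mult2)
  then obtain L where L: "L \<in> carrier_mat n m" and AL: "A * L = P"
    using exists_factor_if_cols_in_image[OF A P] by blast
  have "A * (L * A) = P * A" using A L by (simp add: AL assoc_mult_mat[of A m n L m A, symmetric])
  also have "\<dots> = 1\<^sub>m m * A - (C * B) * A"
    unfolding P_def using A B C by (intro minus_mult_distrib_mat) auto
  also have "\<dots> = A - C * (B * A)" using A B C by (simp add: assoc_mult_mat[of C m r B m A])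
  also have "C * (B * A) = 0\<^sub>m m n" using C by (simp add: BA)
  also have "A - 0\<^sub>m m n = A * 1\<^sub>m n" using A by (intro eq_matI) auto
  finally have "A * (L * A) = A * 1\<^sub>m n" .
  then have "L * A = 1\<^sub>m n"
    using A L by (intro inj_imp_mult_left_cancel[OF A inj_A, of "L * A" n]) auto
  moreover have "A * L + C * B = 1\<^sub>m m" unfolding AL P_def using B C by (intro eq_matI) auto
  ultimately show thesis using L that by blast
qed

lemma rank: "m = n + r"
proof -
  obtain C where C: "C \<in> carrier_mat m r" and BC: "B * C = 1\<^sub>m r"
    using surj_imp_right_inverse[OF B surj_B] by blast
  obtain L where L: "L \<in> carrier_mat n m" and LA: "L * A = 1\<^sub>m n" and split: "A * L + C * B = 1\<^sub>m m"
    using splitting[OF C BC] by blast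
  have "(of_nat m :: 'a) = trace_mat (A * L + C * B)" by (simp add: split)
  also have "\<dots> = trace_mat (A * L) + trace_mat (C * B)"
    using A B C L by (intro trace_mat_add) auto
  also have "\<dots> = of_nat n + of_nat r"
    using A B C L by (simp add: trace_mat_mult_comm[of A m n] trace_mat_mult_comm[of C m r] LA BC)
  finally show ?thesis by (metis of_nat_add of_nat_eq_iff)
qed

lemma det_append_cols:
  assumes C: "C \<in> carrier_mat m r" and BC: "B * C = 1\<^sub>m r" and C': "C' \<in> carrier_mat m r"
  shows "det (A @\<^sub>c C) \<noteq> 0" and "det (A @\<^sub>c C') = det (A @\<^sub>c C) * det (B * C')"
proof -
  obtain L where L: "L \<in> carrier_mat n m" and LA: "L * A = 1\<^sub>m n"
    using splitting[OF C BC] by blast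
  have X: "L @\<^sub>r B \<in> carrier_mat m m" using L B rank by auto
  have det_X: "det (L @\<^sub>r B) * det (A @\<^sub>c D) = det (B * D)" if D: "D \<in> carrier_mat m r" for D
  proof -
    have AD: "A @\<^sub>c D \<in> carrier_mat m m" using A D rank by auto
    have "(L @\<^sub>r B) * (A @\<^sub>c D) = four_block_mat (1\<^sub>m n) (L * D) (0\<^sub>m r n) (B * D)"
      using append_rows_mult_append_cols[OF L B A D] by (simp add: LA BA)
    then have "det ((L @\<^sub>r B) * (A @\<^sub>c D)) = det (B * D)"
      using L B D by (simp add: det_four_block_mat_lower_left_zero[of _ n "L * D" r _ "B * D"])
    then show ?thesis using det_mult[OF X AD] by simp
  qed
  have "det (L @\<^sub>r B) * det (A @\<^sub>c C) = 1" using det_X[OF C] by (simp add: BC)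
  then show "det (A @\<^sub>c C) \<noteq> 0" by auto
  show "det (A @\<^sub>c C') = det (A @\<^sub>c C) * det (B * C')"
    using det_X[OF C'] \<open>det (L @\<^sub>r B) * det (A @\<^sub>c C) = 1\<close>
    by (metis mult.assoc mult.commute mult.left_neutral)
qed

lemma kernel_transpose_A:
  assumes z: "z \<in> carrier_vec m" and Az: "A\<^sup>T *\<^sub>v z = 0\<^sub>v n"
  shows "\<exists>u \<in> carrier_vec r. B\<^sup>T *\<^sub>v u = z"
proof -
  obtain C where C: "C \<in> carrier_mat m r" and BC: "B * C = 1\<^sub>m r"
    using surj_imp_right_inverse[OF B surj_B] by blast
  obtain L where L: "L \<in> carrier_mat n m" and split: "A * L + C * B = 1\<^sub>m m"
    using splitting[OF C BC] by blast
  have "z = (A * L + C * B)\<^sup>T *\<^sub>v z" using z by (simp add: split)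
  also have "\<dots> = L\<^sup>T *\<^sub>v (A\<^sup>T *\<^sub>v z) + B\<^sup>T *\<^sub>v (C\<^sup>T *\<^sub>v z)"
    using A B C L z
    by (simp add: transpose_add[of _ m m] transpose_mult[of _ m n] transpose_mult[of _ m r]
        add_mult_distrib_mat_vec[of _ m m])
  also have "L\<^sup>T *\<^sub>v (A\<^sup>T *\<^sub>v z) = 0\<^sub>v m" unfolding Az using L by (intro eq_vecI) auto
  also have "0\<^sub>v m + B\<^sup>T *\<^sub>v (C\<^sup>T *\<^sub>v z) = B\<^sup>T *\<^sub>v (C\<^sup>T *\<^sub>v z)" using B C z by simp
  finally have "B\<^sup>T *\<^sub>v (C\<^sup>T *\<^sub>v z) = z" ..
  moreover have "C\<^sup>T *\<^sub>v z \<in> carrier_vec r" using C z by (intro mult_mat_vec_carrier) auto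
  ultimately show ?thesis by blast
qed

end

section \<open>Homogeneous holomorphic functions and matrices of forms\<close>

lemma holomorphic_if_local_quotients:
  fixes f :: "complex \<Rightarrow> complex"
  assumes local: "\<And>t0. \<exists>g h. g holomorphic_on UNIV \<and> h holomorphic_on UNIV \<and> g t0 \<noteq> 0 \<and>
      (\<forall>t. g t \<noteq> 0 \<longrightarrow> f t = h t / g t)"
  shows "f holomorphic_on UNIV"
proof -
  have "f field_differentiable at t0" for t0
  proof -
    obtain g h where g: "g holomorphic_on UNIV" and h: "h holomorphic_on UNIV" and "g t0 \<noteq> 0"
      and f: "\<And>t. g t \<noteq> 0 \<Longrightarrow> f t = h t / g t" using local[of t0] by blast
    define U where "U = g -` (- {0})"
    have "open U" unfolding U_def
      using holomorphic_on_imp_continuous_on[OF g] by (intro open_vimage) auto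
    moreover have "(\<lambda>t. h t / g t) holomorphic_on U"
      using g h by (intro holomorphic_intros) (auto simp: U_def intro: holomorphic_on_subset)
    then have "f holomorphic_on U" by (rule holomorphic_transform) (simp add: U_def f)
    ultimately show ?thesis
      using \<open>g t0 \<noteq> 0\<close> by (intro holomorphic_on_imp_differentiable_at) (auto simp: U_def)
  qed
  then show ?thesis by (simp add: holomorphic_on_def field_differentiable_at_within)
qed

lemma holomorphic_on_det:
  fixes M :: "complex \<Rightarrow> complex mat"
  assumes M: "\<And>t. M t \<in> carrier_mat k k"
    and entries: "\<And>i j. i < k \<Longrightarrow> j < k \<Longrightarrow> (\<lambda>t. M t $$ (i, j)) holomorphic_on S"
  shows "(\<lambda>t. det (M t)) holomorphic_on S"
proof -
  have "(\<lambda>t. \<Sum>p | p permutes {..<k}. signof p * (\<Prod>i<k. M t $$ (i, p i))) holomorphic_on S"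
  proof (intro holomorphic_on_sum holomorphic_on_mult holomorphic_on_prod holomorphic_on_const)
    fix p i assume "p \<in> {p. p permutes {..<k}}" "i \<in> {..<k}"
    then have "i < k" "p i < k" using permutes_in_image[of p "{..<k}" i] by auto
    then show "(\<lambda>t. M t $$ (i, p i)) holomorphic_on S" by (rule entries)
  qed
  moreover have "det (M t) = (\<Sum>p | p permutes {..<k}. signof p * (\<Prod>i<k. M t $$ (i, p i)))" for t
    using M[of t] by (simp add: Determinant.det_def atLeast0LessThan)
  ultimately show ?thesis by simp
qed

lemma holomorphic_on_mult_mat_index:
  fixes M N :: "complex \<Rightarrow> complex mat"
  assumes "\<And>t. M t \<in> carrier_mat p q" "\<And>t. N t \<in> carrier_mat q s"
    and "\<And>i k. i < p \<Longrightarrow> k < q \<Longrightarrow> (\<lambda>t. M t $$ (i, k)) holomorphic_on S"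
    and "\<And>k j. k < q \<Longrightarrow> j < s \<Longrightarrow> (\<lambda>t. N t $$ (k, j)) holomorphic_on S"
    and "i < p" "j < s"
  shows "(\<lambda>t. (M t * N t) $$ (i, j)) holomorphic_on S"
proof -
  have "(M t * N t) $$ (i, j) = (\<Sum>k<q. M t $$ (i, k) * N t $$ (k, j))" for t
    using assms(1)[of t] assms(2)[of t] assms(5,6) by (simp add: scalar_prod_def atLeast0LessThan)
  moreover have "(\<lambda>t. \<Sum>k<q. M t $$ (i, k) * N t $$ (k, j)) holomorphic_on S"
    using assms(3-6) by (intro holomorphic_on_sum holomorphic_on_mult) auto
  ultimately show ?thesis by simp
qed

lemma homogeneous_negative_degree_vanishes:
  fixes h :: "complex \<Rightarrow> complex \<Rightarrow> complex" and d :: int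
  assumes holo1: "(\<lambda>t. h t 1) holomorphic_on UNIV" and holo2: "(\<lambda>t. h 1 t) holomorphic_on UNIV"
    and hom: "\<And>l x y. l \<noteq> 0 \<Longrightarrow> (x, y) \<noteq> (0, 0) \<Longrightarrow> h (l * x) (l * y) = l powi d * h x y"
    and d: "d < 0"
  shows "h z 1 = 0"
proof (rule Liouville_weak_0[OF holo1])
  have cont: "isCont (\<lambda>t. h 1 t) 0"
    using holomorphic_on_imp_continuous_on[OF holo2] by (simp add: continuous_on_eq_continuous_at)
  have "((\<lambda>x::complex. inverse (x ^ nat (- d))) \<longlongrightarrow> 0) at_infinity"
    using d by (intro filterlim_compose[OF tendsto_inverse_0 filterlim_power_at_infinity]) auto
  moreover have "x powi d = inverse (x ^ nat (- d))" for x :: complex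
    using d by (metis add.inverse_inverse nat_0_le neg_0_le_iff_le less_imp_le power_int_minus
        power_int_of_nat)
  ultimately have "((\<lambda>x. x powi d * h 1 (inverse x)) \<longlongrightarrow> 0 * h 1 0) at_infinity"
    by (intro tendsto_mult isCont_tendsto_compose[OF cont tendsto_inverse_0]) simp
  moreover have "\<forall>\<^sub>F x in at_infinity. x powi d * h 1 (inverse x) = h x 1"
    unfolding eventually_at_infinity
  proof (intro exI allI impI)
    fix x :: complex assume "1 \<le> norm x"
    then have "x \<noteq> 0" by auto
    then show "x powi d * h 1 (inverse x) = h x 1" using hom[of x 1 "inverse x"] by simp
  qed
  ultimately show "((\<lambda>t. h t 1) \<longlongrightarrow> 0) at_infinity" by (simp add: Lim_transform_eventually)
qed

lemma nonvanishing_homogeneous_degree_zero: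
  fixes h :: "complex \<Rightarrow> complex \<Rightarrow> complex" and d :: int
  assumes holo1: "(\<lambda>t. h t 1) holomorphic_on UNIV" and holo2: "(\<lambda>t. h 1 t) holomorphic_on UNIV"
    and hom: "\<And>l x y. l \<noteq> 0 \<Longrightarrow> (x, y) \<noteq> (0, 0) \<Longrightarrow> h (l * x) (l * y) = l powi d * h x y"
    and nonzero: "\<And>x y. (x, y) \<noteq> (0, 0) \<Longrightarrow> h x y \<noteq> 0"
  shows "d = 0"
proof (rule ccontr)
  assume "d \<noteq> 0"
  then consider "d < 0" | "- d < 0" by linarith
  then show False
  proof cases
    case 1
    have "h 0 1 = 0" using homogeneous_negative_degree_vanishes[OF holo1 holo2 hom 1] .
    with nonzero[of 0 1] show False by simp
  next
    case 2
    have "inverse (h 0 1) = 0"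
    proof (rule homogeneous_negative_degree_vanishes[where h = "\<lambda>x y. inverse (h x y)", OF _ _ _ 2])
      show "(\<lambda>t. inverse (h t 1)) holomorphic_on UNIV"
        using holo1 nonzero by (intro holomorphic_on_inverse) auto
      show "(\<lambda>t. inverse (h 1 t)) holomorphic_on UNIV"
        using holo2 nonzero by (intro holomorphic_on_inverse) auto
      show "inverse (h (l * x) (l * y)) = l powi - d * inverse (h x y)"
        if "l \<noteq> 0" "(x, y) \<noteq> (0, 0)" for l x y
        using that by (simp add: hom power_int_minus)
    qed
    with nonzero[of 0 1] show False by simp
  qed
qed

lemma hpoly_eval_negative_degree[simp]: "d < 0 \<Longrightarrow> hpoly_eval d c x y = 0"
  by (simp add: hpoly_eval_def)

lemma hpoly_eval_scale: "hpoly_eval d c (l * x) (l * y) = l powi d * hpoly_eval d c x y"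
proof (cases "d < 0")
  case False
  have "c k * (l * x) ^ k * (l * y) ^ (nat d - k) = l ^ nat d * (c k * x ^ k * y ^ (nat d - k))"
    if "k \<le> nat d" for k
    using that by (simp add: power_mult_distrib mult_ac flip: power_add)
  then have "(\<Sum>k\<le>nat d. c k * (l * x) ^ k * (l * y) ^ (nat d - k))
      = (\<Sum>k\<le>nat d. l ^ nat d * (c k * x ^ k * y ^ (nat d - k)))"
    by (intro sum.cong) auto
  moreover have "l powi d = l ^ nat d" using False by (simp flip: power_int_of_nat)
  ultimately show ?thesis using False by (simp add: hpoly_eval_def sum_distrib_left)
qed simp

lemma holomorphic_on_hpoly_eval:
  "X holomorphic_on S \<Longrightarrow> Y holomorphic_on S \<Longrightarrow> (\<lambda>t. hpoly_eval d c (X t) (Y t)) holomorphic_on S"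
  unfolding hpoly_eval_def by (cases "d < 0") (auto intro!: holomorphic_intros)

lemma prod_power_int_nth:
  fixes l :: complex
  assumes "l \<noteq> 0"
  shows "(\<Prod>i<length P. l powi (P ! i)) = l powi sum_list P"
proof -
  have "(\<Prod>i\<in>I. l powi f i) = l powi (\<Sum>i\<in>I. f i)" if "finite I" for I and f :: "nat \<Rightarrow> int"
    using that by (induction I rule: finite_induct) (auto simp: power_int_add assms)
  then show ?thesis by (simp add: sum_list_sum_nth atLeast0LessThan)
qed

lemma prod_power_int_uminus_prefix:
  fixes l :: complex
  assumes "l \<noteq> 0" and "length P \<le> m"
  shows "(\<Prod>i<m. if i < length P then l powi (- (P ! i)) else 1) = l powi (- sum_list P)"
proof -
  have "{..<m} \<inter> {i. i < length P} = {..<length P}" using assms(2) by auto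
  then have "(\<Prod>i<m. if i < length P then l powi (- (P ! i)) else 1)
      = (\<Prod>i<length P. l powi (- (P ! i)))"
    by (simp add: prod.If_cases)
  also have "\<dots> = l powi (- sum_list P)"
    using prod_power_int_nth[OF assms(1), of "map uminus P"] uminus_sum_list_map[of "\<lambda>p. p" P]
    by (simp add: comp_def)
  finally show ?thesis .
qed

definition form_mat :: "int list \<Rightarrow> int list \<Rightarrow> (nat \<Rightarrow> nat \<Rightarrow> nat \<Rightarrow> complex)
    \<Rightarrow> complex \<Rightarrow> complex \<Rightarrow> complex mat" where
  "form_mat P Q phi x y =
    mat (length Q) (length P) (\<lambda>(j, i). hpoly_eval (Q ! j - P ! i) (phi j i) x y)"

lemma form_mat_carrier[simp]: "form_mat P Q phi x y \<in> carrier_mat (length Q) (length P)"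
  and dim_form_mat[simp]:
    "dim_row (form_mat P Q phi x y) = length Q" "dim_col (form_mat P Q phi x y) = length P"
  and index_form_mat[simp]: "j < length Q \<Longrightarrow> i < length P \<Longrightarrow>
    form_mat P Q phi x y $$ (j, i) = hpoly_eval (Q ! j - P ! i) (phi j i) x y"
  by (auto simp: form_mat_def)

lemma form_mat_scale:
  assumes "l \<noteq> 0"
  shows "form_mat P Q phi (l * x) (l * y)
    = rescale_mat (\<lambda>j. l powi (Q ! j)) (\<lambda>i. l powi (- (P ! i))) (form_mat P Q phi x y)"
  using assms
  by (intro eq_matI) (auto simp: hpoly_eval_scale power_int_diff power_int_minus field_simps)

lemma transpose_form_mat:
  "(form_mat P Q phi x y)\<^sup>T = form_mat (map uminus Q) (map uminus P) (\<lambda>i j. phi j i) x y"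
  by (intro eq_matI) auto

lemma holomorphic_on_form_mat_index:
  "X holomorphic_on S \<Longrightarrow> Y holomorphic_on S \<Longrightarrow> j < length Q \<Longrightarrow> i < length P \<Longrightarrow>
    (\<lambda>t. form_mat P Q phi (X t) (Y t) $$ (j, i)) holomorphic_on S"
  by (simp add: holomorphic_on_hpoly_eval)

lemma holomorphic_on_form_mat_solution:
  fixes X Y :: "complex \<Rightarrow> complex" and v :: "complex \<Rightarrow> complex vec"
  assumes X: "X holomorphic_on UNIV" and Y: "Y holomorphic_on UNIV"
    and left_inverse: "\<And>t. \<exists>L \<in> carrier_mat (length P) (length Q).
      L * form_mat P Q phi (X t) (Y t) = 1\<^sub>m (length P)"
    and v: "\<And>t. v t \<in> carrier_vec (length P)"
    and solution: "\<And>t. form_mat P Q phi (X t) (Y t) *\<^sub>v v t = b"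
    and i: "i < length P"
  shows "(\<lambda>t. v t $ i) holomorphic_on UNIV"
proof (rule holomorphic_if_local_quotients)
  fix t0
  let ?n = "length P" and ?M = "\<lambda>t. form_mat P Q phi (X t) (Y t)"
  obtain L where L: "L \<in> carrier_mat ?n (length Q)" and L_inv: "L * ?M t0 = 1\<^sub>m ?n"
    using left_inverse by blast
  have S: "L * ?M t \<in> carrier_mat ?n ?n" for t using L by simp
  have S_holo: "(\<lambda>t. (L * ?M t) $$ (a, c)) holomorphic_on UNIV" if "a < ?n" "c < ?n" for a c
    using L that
    by (intro holomorphic_on_mult_mat_index[of _ _ "length Q"] holomorphic_on_form_mat_index X Y)
      auto
  have Sv: "(L * ?M t) *\<^sub>v v t = L *\<^sub>v b" for t
  proof -
    have "(L * ?M t) *\<^sub>v v t = L *\<^sub>v (?M t *\<^sub>v v t)"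
      using L v[of t] by (intro assoc_mult_mat_vec) auto
    then show ?thesis by (simp add: solution)
  qed
  define g where "g t = det (L * ?M t)" for t
  define h where "h t = det (replace_col (L * ?M t) (L *\<^sub>v b) i)" for t
  have g: "g holomorphic_on UNIV" unfolding g_def by (rule holomorphic_on_det[OF S S_holo])
  have "(\<lambda>t. replace_col (L * ?M t) (L *\<^sub>v b) i $$ (a, c)) holomorphic_on UNIV"
    if "a < ?n" "c < ?n" for a c
    using S_holo[OF that] L that
    by (cases "c = i") (simp_all add: replace_col_def del: index_mult_mat(1))
  then have h: "h holomorphic_on UNIV" unfolding h_def
    using L by (intro holomorphic_on_det[of _ ?n]) (auto simp: replace_col_def)
  have "g t0 \<noteq> 0" by (simp add: g_def L_inv)
  moreover have "v t $ i = h t / g t" if "g t \<noteq> 0" for t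
    using cramer_lemma_mat[OF S[of t] v[of t] i] that by (simp add: g_def h_def Sv)
  ultimately show "\<exists>g h. g holomorphic_on UNIV \<and> h holomorphic_on UNIV \<and> g t0 \<noteq> 0 \<and>
      (\<forall>t. g t \<noteq> 0 \<longrightarrow> v t $ i = h t / g t)" using g h by blast
qed

lemma form_mat_solution_scale:
  assumes l: "l \<noteq> 0" and j: "j < length Q" and i: "i < length P"
    and L: "L \<in> carrier_mat (length P) (length Q)"
    and L_inv: "L * form_mat P Q phi x y = 1\<^sub>m (length P)"
    and v: "v \<in> carrier_vec (length P)" and Mv: "form_mat P Q phi x y *\<^sub>v v = unit_vec (length Q) j"
    and w: "w \<in> carrier_vec (length P)"
    and Mw: "form_mat P Q phi (l * x) (l * y) *\<^sub>v w = unit_vec (length Q) j"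
  shows "w $ i = l powi (P ! i - Q ! j) * v $ i"
proof -
  let ?n = "length P" and ?m = "length Q" and ?M = "form_mat P Q phi x y"
  define u where "u = vec ?n (\<lambda>i. l powi (- (P ! i)) * w $ i)"
  have u: "u \<in> carrier_vec ?n" by (simp add: u_def)
  have scaled: "vec ?m (\<lambda>a. l powi (Q ! a) * (?M *\<^sub>v u) $ a) = unit_vec ?m j"
    using Mw by (simp add: form_mat_scale[OF l] rescale_mat_mult_vec[OF form_mat_carrier w] u_def)
  have Mcv: "?M *\<^sub>v (l powi (- (Q ! j)) \<cdot>\<^sub>v v) = l powi (- (Q ! j)) \<cdot>\<^sub>v unit_vec ?m j"
    using mult_mat_vec[OF form_mat_carrier v] by (simp add: Mv)
  have "(?M *\<^sub>v u) $ a = (?M *\<^sub>v (l powi (- (Q ! j)) \<cdot>\<^sub>v v)) $ a" if a: "a < ?m" for a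
  proof -
    have "l powi (Q ! a) * (?M *\<^sub>v u) $ a = vec ?m (\<lambda>a. l powi (Q ! a) * (?M *\<^sub>v u) $ a) $ a"
      using a by (rule index_vec[symmetric])
    also have "\<dots> = unit_vec ?m j $ a" by (simp only: scaled)
    also have "\<dots> = l powi (Q ! a) * (?M *\<^sub>v (l powi (- (Q ! j)) \<cdot>\<^sub>v v)) $ a"
      unfolding Mcv using a j l by (cases "a = j") (simp_all add: power_int_minus)
    finally show ?thesis using l by simp
  qed
  then have "?M *\<^sub>v u = ?M *\<^sub>v (l powi (- (Q ! j)) \<cdot>\<^sub>v v)" using u v by (intro eq_vecI) auto
  then have "(L * ?M) *\<^sub>v u = (L * ?M) *\<^sub>v (l powi (- (Q ! j)) \<cdot>\<^sub>v v)"
    using L u v by (subst (1 2) assoc_mult_mat_vec[of L ?n ?m]) auto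
  then have "u = l powi (- (Q ! j)) \<cdot>\<^sub>v v" using u v by (simp add: L_inv)
  then have "u $ i = (l powi (- (Q ! j)) \<cdot>\<^sub>v v) $ i" by simp
  then have "l powi (- (P ! i)) * w $ i = l powi (- (Q ! j)) * v $ i"
    using i v unfolding u_def by simp
  then show ?thesis using l by (simp add: power_int_diff power_int_minus field_simps)
qed

lemma unit_vec_in_image_imp_degree_le:
  fixes P Q :: "int list" and phi :: "nat \<Rightarrow> nat \<Rightarrow> nat \<Rightarrow> complex"
  assumes left_inverse: "\<And>x y. (x, y) \<noteq> (0, 0) \<Longrightarrow>
      \<exists>L \<in> carrier_mat (length P) (length Q). L * form_mat P Q phi x y = 1\<^sub>m (length P)"
    and image: "\<And>x y. (x, y) \<noteq> (0, 0) \<Longrightarrow>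
      \<exists>v \<in> carrier_vec (length P). form_mat P Q phi x y *\<^sub>v v = unit_vec (length Q) j"
    and j: "j < length Q"
  shows "\<exists>p \<in> set P. Q ! j \<le> p"
proof (rule ccontr)
  let ?n = "length P" and ?m = "length Q"
  assume "\<not> ?thesis"
  then have less: "P ! i < Q ! j" if "i < ?n" for i using that nth_mem by fastforce
  define V where "V x y = (SOME v. v \<in> carrier_vec ?n \<and> form_mat P Q phi x y *\<^sub>v v = unit_vec ?m j)"
    for x y
  have V: "V x y \<in> carrier_vec ?n \<and> form_mat P Q phi x y *\<^sub>v V x y = unit_vec ?m j"
    if "(x, y) \<noteq> (0, 0)" for x y
    unfolding V_def by (rule someI_ex) (use image[OF that] in blast)
  have line1: "(t, 1 :: complex) \<noteq> (0, 0)" and line2: "(1 :: complex, t) \<noteq> (0, 0)" for t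
    by simp_all
  have "V 0 1 $ i = 0" if i: "i < ?n" for i
  proof (rule homogeneous_negative_degree_vanishes[where h = "\<lambda>x y. V x y $ i"])
    show "(\<lambda>t. V t 1 $ i) holomorphic_on UNIV"
      by (rule holomorphic_on_form_mat_solution[where X = "\<lambda>t. t" and Y = "\<lambda>_. 1"])
        (use V[OF line1] left_inverse[OF line1] i in auto)
    show "(\<lambda>t. V 1 t $ i) holomorphic_on UNIV"
      by (rule holomorphic_on_form_mat_solution[where X = "\<lambda>_. 1" and Y = "\<lambda>t. t"])
        (use V[OF line2] left_inverse[OF line2] i in auto)
    show "V (l * x) (l * y) $ i = l powi (P ! i - Q ! j) * V x y $ i"
      if l: "l \<noteq> 0" and p: "(x, y) \<noteq> (0, 0)" for l x y
    proof -
      obtain L where "L \<in> carrier_mat ?n ?m" "L * form_mat P Q phi x y = 1\<^sub>m ?n"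
        using left_inverse[OF p] by blast
      moreover have "(l * x, l * y) \<noteq> (0, 0)" using l p by auto
      ultimately show ?thesis
        using V[OF p] V[of "l * x" "l * y"] by (intro form_mat_solution_scale[OF l j i]) auto
    qed
    show "P ! i - Q ! j < 0" using less[OF i] by simp
  qed
  then have "V 0 1 = 0\<^sub>v ?n" using V[of 0 1] by (intro eq_vecI) auto
  then have "unit_vec ?m j = form_mat P Q phi 0 1 *\<^sub>v 0\<^sub>v ?n" using V[of 0 1] by simp
  also have "\<dots> = 0\<^sub>v ?m" by (intro eq_vecI) auto
  finally have "unit_vec ?m j $ j = (0\<^sub>v ?m :: complex vec) $ j" by simp
  then show False using j by simp
qed

section \<open>Short exact sequences of split bundles\<close>

definition fun_of_vec :: "complex vec \<Rightarrow> nat \<Rightarrow> complex" where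
  "fun_of_vec w = (\<lambda>i. if i < dim_vec w then w $ i else 0)"

lemma fun_of_vec_in_fibre: "w \<in> carrier_vec (length P) \<Longrightarrow> fun_of_vec w \<in> fibre P"
  by (simp add: fun_of_vec_def fibre_def)

lemma fun_of_vec_of_fibre: "v \<in> fibre P \<Longrightarrow> fun_of_vec (vec (length P) v) = v"
  by (auto simp: fun_of_vec_def fibre_def)

lemma fun_of_vec_inj:
  assumes "fun_of_vec a = fun_of_vec b" and "dim_vec a = dim_vec b"
  shows "a = b"
proof (rule eq_vecI)
  fix i assume "i < dim_vec b"
  then show "a $ i = b $ i" using fun_cong[OF assms(1), of i] assms(2) by (simp add: fun_of_vec_def)
qed (use assms in simp)

lemma fun_of_vec_zero: "fun_of_vec (0\<^sub>v k) = (\<lambda>_. 0)"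
  by (rule ext) (simp add: fun_of_vec_def)

lemma map_at_fun_of_vec:
  assumes "u \<in> carrier_vec (length P)"
  shows "map_at P Q phi x y (fun_of_vec u) = fun_of_vec (form_mat P Q phi x y *\<^sub>v u)"
proof
  fix j
  have "(\<Sum>i<length P. hpoly_eval (Q ! j - P ! i) (phi j i) x y * fun_of_vec u i)
      = row (form_mat P Q phi x y) j \<bullet> u" if "j < length Q"
    using assms that by (simp add: fun_of_vec_def scalar_prod_def atLeast0LessThan)
  then show "map_at P Q phi x y (fun_of_vec u) j = fun_of_vec (form_mat P Q phi x y *\<^sub>v u) j"
    by (simp add: map_at_def fun_of_vec_def)
qed

lemma form_mat_inj:
  assumes inj: "inj_on (map_at P Q phi x y) (fibre P)"
    and v: "v \<in> carrier_vec (length P)" and Mv: "form_mat P Q phi x y *\<^sub>v v = 0\<^sub>v (length Q)"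
  shows "v = 0\<^sub>v (length P)"
proof -
  have "form_mat P Q phi x y *\<^sub>v 0\<^sub>v (length P) = 0\<^sub>v (length Q)" by (intro eq_vecI) auto
  with Mv v have
    "map_at P Q phi x y (fun_of_vec v) = map_at P Q phi x y (fun_of_vec (0\<^sub>v (length P)))"
    by (simp add: map_at_fun_of_vec)
  moreover have "fun_of_vec v \<in> fibre P" "fun_of_vec (0\<^sub>v (length P)) \<in> fibre P"
    using v by (simp_all add: fun_of_vec_in_fibre)
  ultimately have "fun_of_vec v = fun_of_vec (0\<^sub>v (length P))" by (rule inj_onD[OF inj])
  then show ?thesis by (rule fun_of_vec_inj) (use v in simp)
qed

lemma form_mat_preimage:
  assumes w: "w \<in> carrier_vec (length Q)" and image: "fun_of_vec w \<in> map_at P Q phi x y ` fibre P"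
  shows "\<exists>v \<in> carrier_vec (length P). form_mat P Q phi x y *\<^sub>v v = w"
proof -
  obtain v where v: "v \<in> fibre P" "map_at P Q phi x y v = fun_of_vec w"
    using image by (elim imageE) simp
  have "fun_of_vec (form_mat P Q phi x y *\<^sub>v vec (length P) v)
      = map_at P Q phi x y (fun_of_vec (vec (length P) v))"
    by (rule map_at_fun_of_vec[symmetric]) simp
  also have "\<dots> = fun_of_vec w" using v by (simp add: fun_of_vec_of_fibre)
  finally have "form_mat P Q phi x y *\<^sub>v vec (length P) v = w"
    by (rule fun_of_vec_inj) (use w in simp)
  then show ?thesis by (intro bexI[of _ "vec (length P) v"]) auto
qed

lemma short_exact_imp_exact_mat_seq:
  assumes ex: "short_exact E F G alpha beta" and p: "(x, y) \<noteq> (0, 0)"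
  shows "exact_mat_seq (form_mat E F alpha x y) (form_mat F G beta x y)
    (length E) (length F) (length G)"
proof -
  let ?A = "form_mat E F alpha x y" and ?B = "form_mat F G beta x y"
  let ?n = "length E" and ?m = "length F" and ?r = "length G"
  have inj: "inj_on (map_at E F alpha x y) (fibre E)"
    and surj: "map_at F G beta x y ` fibre F = fibre G"
    and exact: "map_at E F alpha x y ` fibre E = {w \<in> fibre F. map_at F G beta x y w = (\<lambda>_. 0)}"
    using ex p unfolding short_exact_def by blast+
  have BA: "?B *\<^sub>v (?A *\<^sub>v v) = 0\<^sub>v ?r" if v: "v \<in> carrier_vec ?n" for v
  proof -
    have "map_at E F alpha x y (fun_of_vec v) \<in> {w \<in> fibre F. map_at F G beta x y w = (\<lambda>_. 0)}"
      unfolding exact[symmetric] using v by (intro imageI fun_of_vec_in_fibre)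
    then have "fun_of_vec (?B *\<^sub>v (?A *\<^sub>v v)) = fun_of_vec (0\<^sub>v ?r)"
      by (simp add: fun_of_vec_zero map_at_fun_of_vec[OF v]
          map_at_fun_of_vec[OF mult_mat_vec_carrier[OF form_mat_carrier v]])
    then show ?thesis by (rule fun_of_vec_inj) simp_all
  qed
  show ?thesis
  proof
    show "?A \<in> carrier_mat ?m ?n" "?B \<in> carrier_mat ?r ?m" by simp_all
    show "v = 0\<^sub>v ?n" if "v \<in> carrier_vec ?n" "?A *\<^sub>v v = 0\<^sub>v ?m" for v
      using form_mat_inj[OF inj] that .
    show "\<exists>w \<in> carrier_vec ?m. ?B *\<^sub>v w = z" if z: "z \<in> carrier_vec ?r" for z
      by (rule form_mat_preimage[OF z]) (simp add: surj fun_of_vec_in_fibre z)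
    show "\<exists>v \<in> carrier_vec ?n. ?A *\<^sub>v v = w" if w: "w \<in> carrier_vec ?m" "?B *\<^sub>v w = 0\<^sub>v ?r" for w
      by (rule form_mat_preimage[OF w(1)])
        (use w in \<open>simp add: exact map_at_fun_of_vec fun_of_vec_in_fibre fun_of_vec_zero\<close>)
    show "?B * ?A = 0\<^sub>m ?r ?n"
      using assoc_mult_mat_vec[OF form_mat_carrier form_mat_carrier]
      by (intro eq_zero_mat_if_annihilates mult_carrier_mat[OF form_mat_carrier form_mat_carrier])
        (simp add: BA)
  qed
qed

locale short_exact_bundles =
  fixes E F G :: "int list" and alpha beta :: "nat \<Rightarrow> nat \<Rightarrow> nat \<Rightarrow> complex"
  assumes short_exact: "short_exact E F G alpha beta"
begin

abbreviation A :: "complex \<Rightarrow> complex \<Rightarrow> complex mat" where "A \<equiv> form_mat E F alpha"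
abbreviation B :: "complex \<Rightarrow> complex \<Rightarrow> complex mat" where "B \<equiv> form_mat F G beta"

lemma exact_at: "(x, y) \<noteq> (0, 0) \<Longrightarrow> exact_mat_seq (A x y) (B x y) (length E) (length F) (length G)"
  by (rule short_exact_imp_exact_mat_seq[OF short_exact])

lemma length_middle: "length F = length E + length G"
  using exact_mat_seq.rank[OF exact_at[of 1 0]] by simp

definition right_inverse :: "complex \<Rightarrow> complex \<Rightarrow> complex mat" where
  "right_inverse x y = (SOME C. C \<in> carrier_mat (length F) (length G) \<and> B x y * C = 1\<^sub>m (length G))"

lemma right_inverse:
  assumes "(x, y) \<noteq> (0, 0)"
  shows "right_inverse x y \<in> carrier_mat (length F) (length G)"
    and "B x y * right_inverse x y = 1\<^sub>m (length G)"
proof -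
  interpret exact_mat_seq "A x y" "B x y" "length E" "length F" "length G"
    by (rule exact_at[OF assms])
  have "\<exists>C. C \<in> carrier_mat (length F) (length G) \<and> B x y * C = 1\<^sub>m (length G)"
    using surj_imp_right_inverse[OF B surj_B] by blast
  from someI_ex[OF this] show "right_inverse x y \<in> carrier_mat (length F) (length G)"
    "B x y * right_inverse x y = 1\<^sub>m (length G)" by (simp_all add: right_inverse_def)
qed

text \<open>The determinant of the fibrewise isomorphism \<open>E \<oplus> G \<cong> F\<close> given by \<open>A x y\<close> and a splitting
  of \<open>B x y\<close>: a nowhere vanishing section of \<open>O(dg F - dg E - dg G)\<close>.\<close>

definition det_section :: "complex \<Rightarrow> complex \<Rightarrow> complex" where
  "det_section x y = det (A x y @\<^sub>c right_inverse x y)"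

lemma det_section_nonzero: "(x, y) \<noteq> (0, 0) \<Longrightarrow> det_section x y \<noteq> 0"
  unfolding det_section_def
  using exact_mat_seq.det_append_cols(1)[OF exact_at right_inverse] by blast

lemma det_append_cols_eq:
  "(x, y) \<noteq> (0, 0) \<Longrightarrow> C \<in> carrier_mat (length F) (length G) \<Longrightarrow>
    det (A x y @\<^sub>c C) = det_section x y * det (B x y * C)"
  unfolding det_section_def
  using exact_mat_seq.det_append_cols(2)[OF exact_at right_inverse] by blast

lemma det_section_scale:
  assumes l: "l \<noteq> 0" and p: "(x, y) \<noteq> (0, 0)"
  shows "det_section (l * x) (l * y)
    = l powi (sum_list F - sum_list E - sum_list G) * det_section x y"
proof -
  let ?n = "length E" and ?m = "length F" and ?r = "length G"
  let ?C = "right_inverse x y"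
  define C' where "C' = rescale_mat (\<lambda>j. l powi (F ! j)) (\<lambda>_. 1) ?C"
  have C: "?C \<in> carrier_mat ?m ?r" "B x y * ?C = 1\<^sub>m ?r" using right_inverse[OF p] by auto
  have C': "C' \<in> carrier_mat ?m ?r" using C by (simp add: C'_def)
  have "B (l * x) (l * y) * C' = rescale_mat (\<lambda>k. l powi (G ! k)) (\<lambda>_. 1) (1\<^sub>m ?r)"
    using C l unfolding C'_def form_mat_scale[OF l]
    by (subst rescale_mat_mult[of _ ?r ?m _ ?r]) (auto simp: power_int_minus)
  then have det_BC': "det (B (l * x) (l * y) * C') = l powi sum_list G"
    by (simp add: det_rescale_mat[OF one_carrier_mat] prod_power_int_nth[OF l])
  have "A (l * x) (l * y) @\<^sub>c C' = rescale_mat (\<lambda>j. l powi (F ! j))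
      (\<lambda>i. if i < ?n then l powi (- (E ! i)) else 1) (A x y @\<^sub>c ?C)"
    using C unfolding C'_def form_mat_scale[OF l]
    by (simp add: rescale_mat_append_cols[of _ ?m ?n _ ?r])
  moreover have "(\<Prod>i<?m. if i < ?n then l powi (- (E ! i)) else 1) = l powi (- sum_list E)"
    using prod_power_int_uminus_prefix[OF l] length_middle by simp
  moreover have "A x y @\<^sub>c ?C \<in> carrier_mat ?m ?m"
    using carrier_append_cols[OF form_mat_carrier C(1)] length_middle by simp
  ultimately have
    "det (A (l * x) (l * y) @\<^sub>c C') = l powi sum_list F * l powi (- sum_list E) * det_section x y"
    by (simp add: det_rescale_mat prod_power_int_nth[OF l] det_section_def)
  moreover have "(l * x, l * y) \<noteq> (0, 0)" using l p by simp
  ultimately have "det_section (l * x) (l * y) * l powi sum_list G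
      = l powi sum_list F * l powi (- sum_list E) * det_section x y"
    using det_append_cols_eq[OF _ C', of "l * x" "l * y"] det_BC' by simp
  then show ?thesis using l by (simp add: power_int_diff power_int_add power_int_minus field_simps)
qed

lemma holomorphic_on_det_section:
  assumes X: "X holomorphic_on UNIV" and Y: "Y holomorphic_on UNIV"
    and nz: "\<And>t. (X t, Y t) \<noteq> (0, 0)"
  shows "(\<lambda>t. det_section (X t) (Y t)) holomorphic_on UNIV"
proof (rule holomorphic_if_local_quotients)
  fix t0
  let ?n = "length E" and ?m = "length F" and ?r = "length G"
  let ?C = "right_inverse (X t0) (Y t0)"
  have C: "?C \<in> carrier_mat ?m ?r" "B (X t0) (Y t0) * ?C = 1\<^sub>m ?r"
    using right_inverse[OF nz] by auto
  define g where "g t = det (B (X t) (Y t) * ?C)" for t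
  define h where "h t = det (A (X t) (Y t) @\<^sub>c ?C)" for t
  have "g holomorphic_on UNIV" unfolding g_def
    using C(1) by (intro holomorphic_on_det[of _ ?r] holomorphic_on_mult_mat_index[of _ ?r ?m _ ?r]
        holomorphic_on_form_mat_index X Y) auto
  moreover have "(\<lambda>t. (A (X t) (Y t) @\<^sub>c ?C) $$ (a, c)) holomorphic_on UNIV"
    if a: "a < ?m" and c: "c < ?m" for a c
  proof -
    have "(A (X t) (Y t) @\<^sub>c ?C) $$ (a, c)
        = (if c < ?n then A (X t) (Y t) $$ (a, c) else ?C $$ (a, c - ?n))" for t
      using index_append_cols[OF form_mat_carrier C(1) a] c length_middle by simp
    then show ?thesis using a by (cases "c < ?n") (simp_all add: holomorphic_on_hpoly_eval X Y)
  qed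
  then have "h holomorphic_on UNIV" unfolding h_def
    using C(1) length_middle by (intro holomorphic_on_det[of _ ?m]) auto
  moreover have "g t0 \<noteq> 0" by (simp add: g_def C(2))
  moreover have "det_section (X t) (Y t) = h t / g t" if "g t \<noteq> 0" for t
    using det_append_cols_eq[OF nz C(1)] that by (simp add: g_def h_def)
  ultimately show "\<exists>g h. g holomorphic_on UNIV \<and> h holomorphic_on UNIV \<and> g t0 \<noteq> 0 \<and>
      (\<forall>t. g t \<noteq> 0 \<longrightarrow> det_section (X t) (Y t) = h t / g t)" by blast
qed

lemma degree_middle: "sum_list F = sum_list E + sum_list G"
proof -
  have "sum_list F - sum_list E - sum_list G = 0"
  proof (rule nonvanishing_homogeneous_degree_zero[where h = det_section])
    show "(\<lambda>t. det_section t 1) holomorphic_on UNIV" "(\<lambda>t. det_section 1 t) holomorphic_on UNIV"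
      by (intro holomorphic_on_det_section holomorphic_intros; simp)+
  qed (simp_all add: det_section_scale det_section_nonzero)
  then show ?thesis by simp
qed

lemma middle_le_outer:
  assumes "f \<in> set F"
  shows "\<exists>e \<in> set E \<union> set G. f \<le> e"
proof (cases "\<exists>g \<in> set G. f \<le> g")
  case False
  obtain j where j: "j < length F" and f: "f = F ! j" using assms by (auto simp: in_set_conv_nth)
  have "\<exists>e \<in> set E. F ! j \<le> e"
  proof (rule unit_vec_in_image_imp_degree_le[OF _ _ j])
    fix x y :: complex assume p: "(x, y) \<noteq> (0, 0)"
    interpret exact_mat_seq "A x y" "B x y" "length E" "length F" "length G"
      by (rule exact_at[OF p])
    show "\<exists>L \<in> carrier_mat (length E) (length F). L * A x y = 1\<^sub>m (length E)"
      using splitting[OF right_inverse[OF p]] by blast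
    have "B x y *\<^sub>v unit_vec (length F) j = 0\<^sub>v (length G)"
      using j False f by (intro eq_vecI) (auto simp: not_le nth_mem)
    then show "\<exists>v \<in> carrier_vec (length E). A x y *\<^sub>v v = unit_vec (length F) j"
      using j by (intro kernel_B) auto
  qed
  then show ?thesis by (auto simp: f)
qed auto

lemma outer_le_middle:
  assumes "f \<in> set F"
  shows "\<exists>e \<in> set E \<union> set G. e \<le> f"
proof (cases "\<exists>e \<in> set E. e \<le> f")
  case False
  obtain j where j: "j < length F" and f: "f = F ! j" using assms by (auto simp: in_set_conv_nth)
  let ?BT = "form_mat (map uminus G) (map uminus F) (\<lambda>i k. beta k i)"
  have BT: "?BT x y = (B x y)\<^sup>T" for x y by (simp add: transpose_form_mat)
  have "\<exists>e \<in> set (map uminus G). map uminus F ! j \<le> e"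
  proof (rule unit_vec_in_image_imp_degree_le)
    fix x y :: complex assume p: "(x, y) \<noteq> (0, 0)"
    interpret exact_mat_seq "A x y" "B x y" "length E" "length F" "length G"
      by (rule exact_at[OF p])
    have "(right_inverse x y)\<^sup>T * (B x y)\<^sup>T = 1\<^sub>m (length G)"
      using transpose_mult[OF form_mat_carrier[of F G beta x y] right_inverse(1)[OF p]]
        right_inverse(2)[OF p] by simp
    then show "\<exists>L \<in> carrier_mat (length (map uminus G)) (length (map uminus F)).
        L * ?BT x y = 1\<^sub>m (length (map uminus G))"
      using right_inverse[OF p] by (intro bexI[of _ "(right_inverse x y)\<^sup>T"]) (auto simp: BT)
    have "(A x y)\<^sup>T *\<^sub>v unit_vec (length F) j = 0\<^sub>v (length E)"
      using j False f by (intro eq_vecI) (auto simp: not_le nth_mem)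
    then show "\<exists>u \<in> carrier_vec (length (map uminus G)).
        ?BT x y *\<^sub>v u = unit_vec (length (map uminus F)) j"
      using j by (auto simp: BT dest!: kernel_transpose_A[rotated])
  qed (use j in simp)
  then show ?thesis using j by (auto simp: f)
qed auto

end

section \<open>Slopes of split bundles\<close>

lemma mu_le_if_bounded:
  fixes c :: int
  assumes "L \<noteq> []" and "\<And>y. y \<in> set L \<Longrightarrow> y \<le> c"
  shows "mu L \<le> c"
proof -
  have "sum_list L \<le> int (length L) * c"
    using sum_list_mono[of L "\<lambda>y. y" "\<lambda>_. c"] assms(2) by (simp add: sum_list_triv)
  then have "real_of_int (sum_list L) \<le> real (length L) * c"
    by (metis of_int_le_iff of_int_mult of_int_of_nat_eq)
  then show ?thesis using assms(1) by (simp add: mu_def dg_def rk_def pos_divide_le_eq mult.commute)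
qed

lemma mu_less_if_bounded:
  fixes c :: int
  assumes "\<And>y. y \<in> set L \<Longrightarrow> y \<le> c" and x: "x \<in> set L" "x < c"
  shows "mu L < c"
proof -
  have "sum_list L = x + sum_list (remove1 x L)"
    using sum_list_map_remove1[OF x(1), of "\<lambda>y. y"] by simp
  also have "sum_list (remove1 x L) \<le> int (length (remove1 x L)) * c"
    using sum_list_mono[of "remove1 x L" "\<lambda>y. y" "\<lambda>_. c"] assms(1) set_remove1_subset
    by (fastforce simp: sum_list_triv)
  also have "int (length (remove1 x L)) = int (length L) - 1"
    using length_pos_if_in_set[OF x(1)] by (simp add: length_remove1 x(1) of_nat_diff Suc_leI)
  finally have "sum_list L < int (length L) * c" using x(2) by (simp add: algebra_simps)
  then have "real_of_int (sum_list L) < real (length L) * c"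
    by (metis of_int_less_iff of_int_mult of_int_of_nat_eq)
  moreover have "0 < real (length L)" using length_pos_if_in_set[OF x(1)] by simp
  ultimately show ?thesis by (simp add: mu_def dg_def rk_def pos_divide_less_eq mult.commute)
qed

lemma mu_map_uminus: "mu (map uminus L) = - mu L"
proof -
  have "sum_list (map uminus L) = - sum_list L"
    using uminus_sum_list_map[of "\<lambda>y. y" L] by (simp add: comp_def)
  then show ?thesis by (simp add: mu_def dg_def rk_def)
qed

lemma mu_ge_if_bounded:
  fixes c :: int
  assumes "L \<noteq> []" and "\<And>y. y \<in> set L \<Longrightarrow> c \<le> y"
  shows "c \<le> mu L"
proof -
  have "mu (map uminus L) \<le> - c" by (rule mu_le_if_bounded) (use assms in auto)
  then show ?thesis by (simp add: mu_map_uminus)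
qed

lemma mu_greater_if_bounded:
  fixes c :: int
  assumes "\<And>y. y \<in> set L \<Longrightarrow> c \<le> y" and "x \<in> set L" "c < x"
  shows "c < mu L"
proof -
  have "mu (map uminus L) < - c" by (rule mu_less_if_bounded[of _ _ "- x"]) (use assms in auto)
  then show ?thesis by (simp add: mu_map_uminus)
qed

lemma balanced_mu_bounds:
  assumes "L \<noteq> []" and "balanced_by 1 L"
  shows "real_of_int (Max (set L) - 1) < mu L" and "mu L < real_of_int (Min (set L) + 1)"
proof -
  have "Max (set L) - Min (set L) \<le> 1" using assms by (simp add: balanced_by_def)
  then have spread: "Max (set L) \<le> Min (set L) + 1" by linarith
  have "y \<le> Min (set L) + 1" if "y \<in> set L" for y
    using that spread by (meson List.finite_set Max_ge order.trans)
  then show "mu L < real_of_int (Min (set L) + 1)"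
    using assms(1) by (intro mu_less_if_bounded[of L _ "Min (set L)"]) auto
  have "Max (set L) - 1 \<le> y" if "y \<in> set L" for y
    using that spread Min_le[OF List.finite_set that] by linarith
  then show "real_of_int (Max (set L) - 1) < mu L"
    using assms(1) by (intro mu_greater_if_bounded[of L _ "Max (set L)"]) auto
qed

lemma mu_mediant:
  assumes "length F = length E + length G" and "sum_list F = sum_list E + sum_list G"
    and "E \<noteq> []" and "G \<noteq> []"
  shows "mu E \<le> mu F \<longleftrightarrow> mu E \<le> mu G" and "mu F \<le> mu E \<longleftrightarrow> mu G \<le> mu E"
proof -
  have n: "real (length E) > 0" and r: "real (length G) > 0" using assms(3,4) by auto
  then have nr: "real (length E) + real (length G) > 0" by linarith
  show "mu E \<le> mu F \<longleftrightarrow> mu E \<le> mu G" "mu F \<le> mu E \<longleftrightarrow> mu G \<le> mu E"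
    using n r nr
    by (simp_all add: mu_def dg_def rk_def assms(1,2) divide_le_eq le_divide_eq algebra_simps)
qed

lemma balanced_by_if_within:
  assumes "G \<noteq> []" and "balanced_by j G" and "\<And>f. f \<in> set F \<Longrightarrow> Min (set G) \<le> f \<and> f \<le> Max (set G)"
  shows "balanced_by j F"
proof (cases "F = []")
  case False
  then have "Min (set G) \<le> Min (set F)" "Max (set F) \<le> Max (set G)" using assms(3) by auto
  then show ?thesis using assms(1,2) by (simp add: balanced_by_def)
qed (simp add: balanced_by_def)

locale degree_constraints =
  fixes E F G :: "int list"
  assumes E_nonempty: "E \<noteq> []" and E_balanced: "balanced_by 1 E" and G_balanced: "balanced_by 2 G"
    and rank: "length F = length E + length G" and degree: "sum_list F = sum_list E + sum_list G"
    and upper: "\<And>f. f \<in> set F \<Longrightarrow> \<exists>e \<in> set E \<union> set G. f \<le> e"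
    and lower: "\<And>f. f \<in> set F \<Longrightarrow> \<exists>e \<in> set E \<union> set G. e \<le> f"
begin

lemma balanced_if_G_spans:
  assumes "G \<noteq> []" and "Min (set G) \<le> Min (set E)" and "Max (set E) \<le> Max (set G)"
  shows "balanced_by 2 F"
proof (rule balanced_by_if_within[OF assms(1) G_balanced])
  fix f assume f: "f \<in> set F"
  have "e \<le> Max (set G)" if "e \<in> set E \<union> set G" for e
    using that assms E_nonempty by (auto intro: order_trans[OF Max_ge])
  moreover have "Min (set G) \<le> e" if "e \<in> set E \<union> set G" for e
    using that assms E_nonempty by (auto intro: order_trans[OF _ Min_le])
  ultimately show "Min (set G) \<le> f \<and> f \<le> Max (set G)"
    using upper[OF f] lower[OF f] by (meson order_trans)
qed

lemma slope_up:
  assumes "mu E \<le> mu F"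
  shows "balanced_by 2 F \<or> (\<forall>a \<in> set G. \<lfloor>mu E\<rfloor> \<le> a)"
proof (rule disjCI)
  assume "\<not> (\<forall>a \<in> set G. \<lfloor>mu E\<rfloor> \<le> a)"
  then obtain a where a: "a \<in> set G" "a < \<lfloor>mu E\<rfloor>" by auto
  then have G: "G \<noteq> []" by auto
  have "Min (set G) \<le> a" using a(1) by simp
  moreover have "a < Min (set E)"
    using a(2) balanced_mu_bounds(2)[OF E_nonempty E_balanced] by linarith
  moreover have "Max (set E) - 1 < mu G"
    using balanced_mu_bounds(1)[OF E_nonempty E_balanced] assms
      mu_mediant(1)[OF rank degree E_nonempty G] by linarith
  then have "Max (set E) - 1 < Max (set G)"
    using mu_le_if_bounded[OF G, of "Max (set G)"] by fastforce
  ultimately show "balanced_by 2 F" using G by (intro balanced_if_G_spans) auto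
qed

lemma slope_down:
  assumes "mu F \<le> mu E"
  shows "balanced_by 2 F \<or> (\<forall>a \<in> set G. a \<le> \<lceil>mu E\<rceil>)"
proof (rule disjCI)
  assume "\<not> (\<forall>a \<in> set G. a \<le> \<lceil>mu E\<rceil>)"
  then obtain a where a: "a \<in> set G" "\<lceil>mu E\<rceil> < a" by auto
  then have G: "G \<noteq> []" by auto
  have "a \<le> Max (set G)" using a(1) by simp
  moreover have "Max (set E) < a"
    using a(2) balanced_mu_bounds(1)[OF E_nonempty E_balanced] by linarith
  moreover have "mu G < Min (set E) + 1"
    using balanced_mu_bounds(2)[OF E_nonempty E_balanced] assms
      mu_mediant(2)[OF rank degree E_nonempty G] by linarith
  then have "Min (set G) < Min (set E) + 1"
    using mu_ge_if_bounded[OF G, of "Min (set G)"] by fastforce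
  ultimately show "balanced_by 2 F" using G by (intro balanced_if_G_spans) auto
qed

end

theorem lemma2p3:
  fixes E F G :: "int list"
    and alpha beta :: "nat \<Rightarrow> nat \<Rightarrow> nat \<Rightarrow> complex"
  assumes ex: "short_exact E F G alpha beta"
    and Epos: "E \<noteq> []"
    and Ebal: "balanced_by 1 E"
    and Gbal: "balanced_by 2 G"
  shows "(mu E \<le> mu F \<longrightarrow> balanced_by 2 F \<or> (\<forall>a\<in>set G. a \<ge> \<lfloor>mu E\<rfloor>))
       \<and> (mu F \<le> mu E \<longrightarrow> balanced_by 2 F \<or> (\<forall>a\<in>set G. a \<le> \<lceil>mu E\<rceil>))"
proof -
  interpret short_exact_bundles E F G alpha beta by unfold_locales (rule ex)
  interpret degree_constraints E F G
    using Epos Ebal Gbal length_middle degree_middle middle_le_outer outer_le_middle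
    by unfold_locales auto
  show ?thesis using slope_up slope_down by auto
qed

end
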